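(* Let $N$ denote the smallest $k\ge 1$ such that $w_1$ and $w_{k+1}$ belong to the same class. Then for each $1\le i\le M$, $$E\left(h_{N-1}\mid w_1\in C_i\right)=-\log(p_i),$$ and consequently $\hat H_2=h_{N-1}$ is an unbiased estimator of the Shannon entropy: $$E(h_{N-1})=-\sum_{i=1}^M p_i\log(p_i).$$
   Context: Let $w_1,w_2,\dots$ be an infinite sequence of independent, identically distributed samples. Each sample belongs to exactly one of $M$ classes $C_1,\dots,C_M$, and $\Pr(w_k\in C_i)=p_i$, where $0<p_i\le 1$ and $\sum_{i=1}^M p_i=1$. The logarithm is the natural logarithm. The harmonic numbers are $h_n=\sum_{k=1}^n 1/k$ for $n\ge 1$, with $h_0=0$. *)

theory Defs
  imports "HOL-Probability.Probability"
begin

definition cond_exp_event :: "'a measure \<Rightarrow> ('a \<Rightarrow> real) \<Rightarrow> 'a set \<Rightarrow> real" where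
  "cond_exp_event M X A = (\<integral>x. indicator A x * X x \<partial>M) / measure M A"

definition first_return :: "nat \<Rightarrow> (nat \<Rightarrow> 'b set) \<Rightarrow> (nat \<Rightarrow> 'a \<Rightarrow> 'b) \<Rightarrow> 'a \<Rightarrow> nat" where
  "first_return m C w x = (LEAST k. k \<ge> 1 \<and> (\<exists>i\<in>{1..m}. w 1 x \<in> C i \<and> w (k+1) x \<in> C i))"

end

theory Submission
  imports Defs
begin

text \<open>Fix the class \<open>C\<^sub>i\<close> of \<open>w\<^sub>1\<close> and put \<open>p = p\<^sub>i\<close>. By independence, \<open>w\<^sub>1 \<in> C\<^sub>i\<close> together
  with \<open>N = n + 1\<close> has probability \<open>p\<^sup>2 (1 - p)\<^sup>n\<close>, and these events exhaust \<open>w\<^sub>1 \<in> C\<^sub>i\<close> up to a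
  null set. Hence \<open>E(h(N - 1); w\<^sub>1 \<in> C\<^sub>i) = p\<^sup>2 \<Sum>\<^sub>n h\<^sub>n (1 - p)\<^sup>n\<close>, and the generating function
  \<open>\<Sum>\<^sub>n h\<^sub>n x\<^sup>n = - ln (1 - x) / (1 - x)\<close>, a Cauchy product of the logarithmic and the geometric
  series, turns this into \<open>- p ln p\<close>. Summing over the classes gives the entropy.\<close>

lemma harm_power_series_sums:
  fixes x :: real
  assumes x: "\<bar>x\<bar> < 1"
  shows "(\<lambda>k. harm k * x ^ k) sums (- ln (1 - x) / (1 - x))"
proof -
  define a where "a = (\<lambda>i::nat. x ^ i / real i)"
  have a: "a sums (- ln (1 - x))"
    using sums_minus[OF ln_series'[of "-x"]] x by (simp add: a_def)
  have b: "(\<lambda>i. x ^ i) sums (1 / (1 - x))"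
    using geometric_sums[of x] x by simp
  have "(\<lambda>k. \<Sum>i\<le>k. a i * x ^ (k - i)) sums ((\<Sum>k. a k) * (\<Sum>k. x ^ k))"
  proof (rule Cauchy_product_sums)
    show "summable (\<lambda>k. norm (a k))"
    proof (rule summable_comparison_test)
      have "norm (a k) \<le> \<bar>x\<bar> ^ k" for k
        by (cases "k = 0") (auto simp: a_def power_abs divide_le_eq mult_le_cancel_left1)
      then show "\<exists>N. \<forall>n\<ge>N. norm (norm (a n)) \<le> \<bar>x\<bar> ^ n" by auto
      show "summable (\<lambda>k. \<bar>x\<bar> ^ k)" using x by simp
    qed
    show "summable (\<lambda>k. norm (x ^ k))"
      using summable_geometric[of "\<bar>x\<bar>"] x by (simp add: power_abs)
  qed
  moreover have "(\<Sum>i\<le>k. a i * x ^ (k - i)) = harm k * x ^ k" for k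
  proof -
    have "(\<Sum>i\<le>k. a i * x ^ (k - i)) = (\<Sum>i\<le>k. inverse (real i) * x ^ k)"
      by (rule sum.cong) (auto simp: a_def divide_inverse power_add[symmetric])
    also have "\<dots> = (\<Sum>i\<le>k. inverse (real i)) * x ^ k"
      by (simp add: sum_distrib_right)
    also have "(\<Sum>i\<le>k. inverse (real i)) = harm k"
      by (simp add: harm_def atMost_atLeast0 atLeast0_atMost_Suc_eq_insert_0 sum.atLeast_Suc_atMost)
    finally show ?thesis .
  qed
  ultimately show ?thesis
    by (simp add: sums_unique[OF a, symmetric] sums_unique[OF b, symmetric])
qed

lemma harm_geometric_moment_sums:
  fixes q :: real
  assumes "0 \<le> q" "q \<le> 1"
  shows "(\<lambda>n. harm n * (q\<^sup>2 * (1 - q) ^ n)) sums (- q * ln q)"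
proof (cases "q = 0")
  case False
  with assms have "(\<lambda>n. q\<^sup>2 * (harm n * (1 - q) ^ n))
      sums (q\<^sup>2 * (- ln (1 - (1 - q)) / (1 - (1 - q))))"
    by (intro sums_mult harm_power_series_sums) auto
  with False show ?thesis
    by (simp add: power2_eq_square mult_ac)
qed simp

text \<open>For \<open>B\<close> the class of \<open>w 1\<close>, this is the event \<open>first_return = n + 1\<close>, on which
  \<open>harm (first_return - 1) = harm n\<close>.\<close>

definition first_return_event :: "'a measure \<Rightarrow> (nat \<Rightarrow> 'a \<Rightarrow> 'b) \<Rightarrow> 'b set \<Rightarrow> nat \<Rightarrow> 'a set" where
  "first_return_event M w B n =
     {x \<in> space M. w 1 x \<in> B \<and> (\<forall>j\<in>{2..Suc n}. w j x \<notin> B) \<and> w (Suc (Suc n)) x \<in> B}"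

lemma disjoint_family_first_return_event: "disjoint_family (first_return_event M w B)"
  unfolding disjoint_family_on_def
proof (intro ballI impI)
  fix a b :: nat
  assume "a \<noteq> b"
  then have "Suc (Suc (min a b)) \<in> {2..Suc (max a b)}" by auto
  then show "first_return_event M w B a \<inter> first_return_event M w B b = {}"
    unfolding first_return_event_def by (cases "a \<le> b") (auto simp: min_def max_def)
qed

lemma first_return_event_eq_INT:
  assumes "\<And>k. k \<ge> 1 \<Longrightarrow> w k \<in> M \<rightarrow>\<^sub>M S"
  shows "first_return_event M w B n =
    (\<Inter>j\<in>{1..Suc (Suc n)}. w j -` (if j = 1 \<or> j = Suc (Suc n) then B else space S - B) \<inter> space M)"
  (is "_ = ?I")
proof
  show "first_return_event M w B n \<subseteq> ?I"
  proof
    fix x assume x: "x \<in> first_return_event M w B n"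
    have "w j x \<in> space S" if "j \<ge> 1" for j
      using measurable_space[OF assms[OF that]] x by (simp add: first_return_event_def)
    with x show "x \<in> ?I" by (auto simp: first_return_event_def)
  qed
next
  show "?I \<subseteq> first_return_event M w B n"
  proof
    fix x assume x: "x \<in> ?I"
    have in_factor: "x \<in> w j -` (if j = 1 \<or> j = Suc (Suc n) then B else space S - B) \<inter> space M"
      if "j \<in> {1..Suc (Suc n)}" for j
      using x that by blast
    have "w j x \<notin> B" if "j \<in> {2..Suc n}" for j
      using in_factor[of j] that by auto
    then show "x \<in> first_return_event M w B n"
      unfolding first_return_event_def using in_factor[of 1] in_factor[of "Suc (Suc n)"] by auto
  qed
qed

lemma sets_first_return_event:
  assumes meas: "\<And>k. k \<ge> 1 \<Longrightarrow> w k \<in> M \<rightarrow>\<^sub>M S" and B: "B \<in> sets S"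
  shows "first_return_event M w B n \<in> sets M"
proof -
  have "first_return_event M w B n =
      (\<Inter>j\<in>{1..Suc (Suc n)}. w j -` (if j = 1 \<or> j = Suc (Suc n) then B else space S - B) \<inter> space M)"
    using meas by (rule first_return_event_eq_INT)
  also have "\<dots> \<in> sets M"
    by (rule sets.finite_INT) (use meas B measurable_sets in auto)
  finally show ?thesis .
qed

lemma (in prob_space) prob_first_return_event:
  assumes meas: "\<And>k. k \<ge> 1 \<Longrightarrow> w k \<in> M \<rightarrow>\<^sub>M S"
    and indep: "indep_vars (\<lambda>_. S) w {1..}"
    and iid: "\<And>k. k \<ge> 1 \<Longrightarrow> distr M S (w k) = distr M S (w 1)"
    and B: "B \<in> sets S"
  defines "q \<equiv> prob {x \<in> space M. w 1 x \<in> B}"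
  shows "prob (first_return_event M w B n) = q\<^sup>2 * (1 - q) ^ n"
proof -
  have prob_in: "prob (w j -` B \<inter> space M) = q" if "j \<ge> 1" for j
  proof -
    have "prob (w j -` B \<inter> space M) = measure (distr M S (w j)) B"
      using that B meas by (simp add: measure_distr)
    also have "\<dots> = prob (w 1 -` B \<inter> space M)"
      using B meas by (simp add: iid[OF that] measure_distr)
    finally show ?thesis
      by (simp add: q_def vimage_def Int_def conj_commute)
  qed
  have prob_out: "prob (w j -` (space S - B) \<inter> space M) = 1 - q" if "j \<ge> 1" for j
  proof -
    have "w j -` (space S - B) \<inter> space M = space M - (w j -` B \<inter> space M)"
      using measurable_space[OF meas[OF that]] by auto
    then show ?thesis
      using prob_compl[of "w j -` B \<inter> space M"] prob_in[OF that]
        measurable_sets[OF meas[OF that] B]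
      by simp
  qed
  let ?B = "\<lambda>j. if j = 1 \<or> j = Suc (Suc n) then B else space S - B"
  have "first_return_event M w B n = (\<Inter>j\<in>{1..Suc (Suc n)}. w j -` ?B j \<inter> space M)"
    using meas by (rule first_return_event_eq_INT)
  then have "prob (first_return_event M w B n)
      = (\<Prod>j\<in>{1..Suc (Suc n)}. prob (w j -` ?B j \<inter> space M))"
    by (simp only:) (rule indep_varsD[OF indep], use B in auto)
  also have "\<dots> = (\<Prod>j\<in>{1..Suc (Suc n)}. if j = 1 \<or> j = Suc (Suc n) then q else 1 - q)"
    by (rule prod.cong) (use prob_in prob_out in auto)
  also have "{1..Suc (Suc n)} = insert 1 (insert (Suc (Suc n)) {2..Suc n})" by auto
  also have "(\<Prod>j\<in>insert 1 (insert (Suc (Suc n)) {2..Suc n}). if j = 1 \<or> j = Suc (Suc n) then q else 1 - q)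
      = q\<^sup>2 * (1 - q) ^ n"
    by (simp add: power2_eq_square)
  finally show ?thesis .
qed

lemma (in finite_measure) AE_in_disjoint_Union_if_measure_sums:
  assumes F: "disjoint_family F" "range F \<subseteq> sets M"
    and A: "A \<in> sets M" "(\<Union>n. F n) \<subseteq> A"
    and sums: "(\<lambda>n. measure M (F n)) sums measure M A"
  shows "AE x in M. x \<in> A \<longrightarrow> (\<exists>n. x \<in> F n)"
proof (rule AE_I')
  have UF: "(\<Union>n. F n) \<in> sets M" using F by blast
  have "(\<lambda>n. measure M (F n)) sums measure M (\<Union>n. F n)"
    using F by (intro measure_UNION) (auto simp: emeasure_eq_measure)
  with sums have "measure M (\<Union>n. F n) = measure M A"
    by (rule sums_unique2[symmetric])
  then have "measure M (A - (\<Union>n. F n)) = 0"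
    using A UF by (simp add: finite_measure_Diff)
  then show "A - (\<Union>n. F n) \<in> null_sets M"
    using A UF by (auto simp: emeasure_eq_measure intro: null_setsI)
qed auto

lemma nn_integral_indicator_disjoint_cover:
  fixes f :: "'a \<Rightarrow> ennreal" and c :: "nat \<Rightarrow> ennreal"
  assumes F: "disjoint_family F" "range F \<subseteq> sets M" "(\<Union>n. F n) \<subseteq> A"
    and cover: "AE x in M. x \<in> A \<longrightarrow> (\<exists>n. x \<in> F n)"
    and f: "\<And>n x. x \<in> F n \<Longrightarrow> f x = c n"
  shows "(\<integral>\<^sup>+x. indicator A x * f x \<partial>M) = (\<Sum>n. c n * emeasure M (F n))"
proof -
  have "AE x in M. indicator A x * f x = (\<Sum>n. c n * indicator (F n) x)"
    using cover
  proof eventually_elim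
    case (elim x)
    show ?case
    proof (cases "x \<in> A")
      case True
      with elim obtain n0 where n0: "x \<in> F n0" by blast
      have "x \<notin> F n" if "n \<noteq> n0" for n
        using F(1) n0 that unfolding disjoint_family_on_def by blast
      then have "(\<Sum>n. c n * indicator (F n) x) = (\<Sum>n\<in>{n0}. c n * indicator (F n) x)"
        by (intro suminf_finite) auto
      with True n0 f show ?thesis by simp
    next
      case False
      with F(3) have "x \<notin> F n" for n by blast
      with False show ?thesis by simp
    qed
  qed
  then have "(\<integral>\<^sup>+x. indicator A x * f x \<partial>M) = (\<integral>\<^sup>+x. (\<Sum>n. c n * indicator (F n) x) \<partial>M)"
    by (rule nn_integral_cong_AE)
  also have "\<dots> = (\<Sum>n. \<integral>\<^sup>+x. c n * indicator (F n) x \<partial>M)"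
    using F(2) by (intro nn_integral_suminf) auto
  also have "\<dots> = (\<Sum>n. c n * emeasure M (F n))"
    using F(2) by (simp add: nn_integral_cmult_indicator)
  finally show ?thesis .
qed

locale iid_classes = prob_space M for M :: "'a measure" +
  fixes S :: "'b measure" and w :: "nat \<Rightarrow> 'a \<Rightarrow> 'b" and m :: nat and C :: "nat \<Rightarrow> 'b set"
  assumes meas: "\<And>k. k \<ge> 1 \<Longrightarrow> w k \<in> M \<rightarrow>\<^sub>M S"
    and indep: "indep_vars (\<lambda>_. S) w {1..}"
    and iid: "\<And>k. k \<ge> 1 \<Longrightarrow> distr M S (w k) = distr M S (w 1)"
    and C_sets: "\<And>i. i \<in> {1..m} \<Longrightarrow> C i \<in> sets S"
    and C_part: "\<And>y. y \<in> space S \<Longrightarrow> \<exists>!i. i \<in> {1..m} \<and> y \<in> C i"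
begin

lemma first_sample_in_space: "x \<in> space M \<Longrightarrow> w 1 x \<in> space S"
  using measurable_space[OF meas[of 1]] by simp

lemma class_unique:
  assumes "x \<in> space M" "i \<in> {1..m}" "w 1 x \<in> C i" "j \<in> {1..m}" "w 1 x \<in> C j"
  shows "i = j"
  using C_part[OF first_sample_in_space] assms by blast

lemma first_return_eq_Suc:
  assumes x: "x \<in> first_return_event M w (C i) n" and i: "i \<in> {1..m}"
  shows "first_return m C w x = Suc n"
  unfolding first_return_def
proof (rule Least_equality)
  show "1 \<le> Suc n \<and> (\<exists>i\<in>{1..m}. w 1 x \<in> C i \<and> w (Suc n + 1) x \<in> C i)"
    using x i by (auto simp: first_return_event_def)
next
  fix k assume "1 \<le> k \<and> (\<exists>j\<in>{1..m}. w 1 x \<in> C j \<and> w (k + 1) x \<in> C j)"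
  then obtain j where k: "1 \<le> k" and j: "j \<in> {1..m}" "w 1 x \<in> C j" "w (k + 1) x \<in> C j"
    by blast
  with x i have "j = i"
    by (intro class_unique[of x]) (auto simp: first_return_event_def)
  with x j k show "Suc n \<le> k"
    by (auto simp: first_return_event_def not_less_eq_eq[symmetric])
qed

lemma measurable_first_return[measurable]: "first_return m C w \<in> M \<rightarrow>\<^sub>M count_space UNIV"
  unfolding first_return_def
proof (rule measurable_Least)
  fix k :: nat
  have "{x \<in> space M. 1 \<le> k \<and> (\<exists>i\<in>{1..m}. w 1 x \<in> C i \<and> w (k + 1) x \<in> C i)} \<in> sets M"
  proof (cases "k = 0")
    case False
    then have "{x \<in> space M. 1 \<le> k \<and> (\<exists>i\<in>{1..m}. w 1 x \<in> C i \<and> w (k + 1) x \<in> C i)}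
        = (\<Union>i\<in>{1..m}. (w 1 -` C i \<inter> space M) \<inter> (w (k + 1) -` C i \<inter> space M))"
      by auto
    also have "\<dots> \<in> sets M"
      using meas C_sets by (intro sets.finite_UN sets.Int measurable_sets) auto
    finally show ?thesis .
  qed simp
  then show "(\<lambda>x. 1 \<le> k \<and> (\<exists>i\<in>{1..m}. w 1 x \<in> C i \<and> w (k + 1) x \<in> C i))
      \<in> M \<rightarrow>\<^sub>M count_space UNIV"
    by (simp only: pred_def)
qed

lemma integral_class_harm_first_return:
  assumes i: "i \<in> {1..m}"
  defines "A \<equiv> {x \<in> space M. w 1 x \<in> C i}"
  shows "integrable M (\<lambda>x. indicator A x * harm (first_return m C w x - 1) :: real)"
    and "(\<integral>x. indicator A x * harm (first_return m C w x - 1) \<partial>M) = - prob A * ln (prob A)"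
proof -
  define q where "q = prob A"
  define F where "F = first_return_event M w (C i)"
  have A_sets: "A \<in> sets M"
    unfolding A_def using measurable_sets[OF meas C_sets[OF i], of 1]
    by (simp add: vimage_def Int_def conj_commute)
  have q: "0 \<le> q" "q \<le> 1" by (simp_all add: q_def)
  have "F n \<in> sets M" for n
    unfolding F_def using meas C_sets[OF i] by (rule sets_first_return_event)
  then have F_sets: "range F \<subseteq> sets M" by blast
  have F_prob: "prob (F n) = q\<^sup>2 * (1 - q) ^ n" for n
    unfolding F_def q_def A_def using meas indep iid C_sets[OF i] by (rule prob_first_return_event)
  have F_sub: "(\<Union>n. F n) \<subseteq> A"
    by (auto simp: F_def A_def first_return_event_def)
  have "(\<lambda>n. q\<^sup>2 * (1 - q) ^ n) sums q"
  proof (cases "q = 0")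
    case False
    with q have "(\<lambda>n. q\<^sup>2 * (1 - q) ^ n) sums (q\<^sup>2 * (1 / (1 - (1 - q))))"
      by (intro sums_mult geometric_sums) auto
    with False show ?thesis by (simp add: power2_eq_square)
  qed simp
  then have "(\<lambda>n. prob (F n)) sums prob A"
    by (simp add: F_prob q_def)
  then have cover: "AE x in M. x \<in> A \<longrightarrow> (\<exists>n. x \<in> F n)"
    using disjoint_family_first_return_event F_sets A_sets F_sub
    unfolding F_def by (intro AE_in_disjoint_Union_if_measure_sums) auto
  have moment: "(\<lambda>n. harm n * prob (F n)) sums (- q * ln q)"
    using harm_geometric_moment_sums[OF q] by (simp add: F_prob)
  have "(\<integral>\<^sup>+x. indicator A x * ennreal (harm (first_return m C w x - 1)) \<partial>M)
      = (\<Sum>n. ennreal (harm n) * emeasure M (F n))"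
    using disjoint_family_first_return_event F_sets F_sub cover
    by (intro nn_integral_indicator_disjoint_cover)
       (auto simp: F_def first_return_eq_Suc[OF _ i])
  also have "\<dots> = (\<Sum>n. ennreal (harm n * prob (F n)))"
    by (simp add: emeasure_eq_measure ennreal_mult harm_nonneg)
  also have "\<dots> = ennreal (- q * ln q)"
    using moment by (subst suminf_ennreal2) (auto simp: harm_nonneg sums_iff)
  finally have nn: "(\<integral>\<^sup>+x. ennreal (indicator A x * harm (first_return m C w x - 1)) \<partial>M)
      = ennreal (- q * ln q)"
    by (simp add: indicator_mult_ennreal mult.commute)
  have "(\<lambda>x. indicator A x * harm (first_return m C w x - 1) :: real) \<in> borel_measurable M"
    using A_sets by measurable
  moreover have "AE x in M. 0 \<le> (indicator A x * harm (first_return m C w x - 1) :: real)"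
    by (simp add: harm_nonneg)
  moreover have "0 \<le> - q * ln q"
    using q by (cases "q = 0") (auto intro!: mult_nonneg_nonpos)
  ultimately have "integrable M (\<lambda>x. indicator A x * harm (first_return m C w x - 1) :: real) \<and>
      (\<integral>x. indicator A x * harm (first_return m C w x - 1) \<partial>M) = - q * ln q"
    using nn by (simp add: nn_integral_eq_integrable)
  then show "integrable M (\<lambda>x. indicator A x * harm (first_return m C w x - 1) :: real)"
    and "(\<integral>x. indicator A x * harm (first_return m C w x - 1) \<partial>M) = - prob A * ln (prob A)"
    by (simp_all add: q_def)
qed

lemma harm_first_return_eq_sum_classes:
  assumes x: "x \<in> space M"
  shows "harm (first_return m C w x - 1) =
    (\<Sum>i\<in>{1..m}. indicator {x \<in> space M. w 1 x \<in> C i} x * harm (first_return m C w x - 1) :: real)"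
proof -
  obtain i0 where i0: "i0 \<in> {1..m}" "w 1 x \<in> C i0"
    using C_part[OF first_sample_in_space[OF x]] by auto
  have "indicator {x \<in> space M. w 1 x \<in> C i} x = (0 :: real)" if "i \<in> {1..m} - {i0}" for i
    using class_unique[OF x i0] that by (auto simp: indicator_def)
  then have "(\<Sum>i\<in>{1..m}. indicator {x \<in> space M. w 1 x \<in> C i} x * harm (first_return m C w x - 1) :: real)
      = indicator {x \<in> space M. w 1 x \<in> C i0} x * harm (first_return m C w x - 1)"
    using i0 by (subst sum.remove[of _ i0]) auto
  with x i0 show ?thesis by simp
qed

lemma integral_harm_first_return:
  shows "integrable M (\<lambda>x. harm (first_return m C w x - 1) :: real)"
    and "(\<integral>x. harm (first_return m C w x - 1) \<partial>M) =
      (\<Sum>i\<in>{1..m}. - prob {x \<in> space M. w 1 x \<in> C i} * ln (prob {x \<in> space M. w 1 x \<in> C i}))"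
proof -
  let ?h = "\<lambda>x. harm (first_return m C w x - 1) :: real"
  let ?A = "\<lambda>i. {x \<in> space M. w 1 x \<in> C i}"
  have h_sum: "?h x = (\<Sum>i\<in>{1..m}. indicator (?A i) x * ?h x)" if "x \<in> space M" for x
    using that by (rule harm_first_return_eq_sum_classes)
  have "integrable M (\<lambda>x. \<Sum>i\<in>{1..m}. indicator (?A i) x * ?h x)"
    by (rule Bochner_Integration.integrable_sum) (rule integral_class_harm_first_return(1))
  then show "integrable M ?h"
    by (subst Bochner_Integration.integrable_cong[OF refl h_sum])
  have "integral\<^sup>L M ?h = (\<integral>x. (\<Sum>i\<in>{1..m}. indicator (?A i) x * ?h x) \<partial>M)"
    by (rule Bochner_Integration.integral_cong[OF refl h_sum])
  also have "\<dots> = (\<Sum>i\<in>{1..m}. \<integral>x. indicator (?A i) x * ?h x \<partial>M)"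
    by (rule Bochner_Integration.integral_sum) (rule integral_class_harm_first_return(1))
  also have "\<dots> = (\<Sum>i\<in>{1..m}. - prob (?A i) * ln (prob (?A i)))"
    using integral_class_harm_first_return(2) by (intro sum.cong) auto
  finally show "integral\<^sup>L M ?h = (\<Sum>i\<in>{1..m}. - prob (?A i) * ln (prob (?A i)))" .
qed

end

theorem mainTheorem2:
  fixes M :: "'a measure" and S :: "'b measure"
    and w :: "nat \<Rightarrow> 'a \<Rightarrow> 'b"
    and m :: nat and C :: "nat \<Rightarrow> 'b set" and p :: "nat \<Rightarrow> real"
  assumes "prob_space M"
    and meas: "\<And>k. k \<ge> 1 \<Longrightarrow> w k \<in> measurable M S"
    and indep: "prob_space.indep_vars M (\<lambda>_. S) w {1..}"
    and iid: "\<And>k. k \<ge> 1 \<Longrightarrow> distr M S (w k) = distr M S (w 1)"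
    and m_pos: "m \<ge> 1"
    and C_sets: "\<And>i. i \<in> {1..m} \<Longrightarrow> C i \<in> sets S"
    and C_part: "\<And>y. y \<in> space S \<Longrightarrow> \<exists>!i. i \<in> {1..m} \<and> y \<in> C i"
    and p_def: "\<And>i. i \<in> {1..m} \<Longrightarrow> measure M {x \<in> space M. w 1 x \<in> C i} = p i"
    and p_pos: "\<And>i. i \<in> {1..m} \<Longrightarrow> 0 < p i \<and> p i \<le> 1"
    and p_sum: "(\<Sum>i=1..m. p i) = 1"
  shows "integrable M (\<lambda>x. harm (first_return m C w x - 1) :: real)
    \<and> (\<forall>i\<in>{1..m}. cond_exp_event M (\<lambda>x. harm (first_return m C w x - 1))
                     {x \<in> space M. w 1 x \<in> C i} = - ln (p i))
    \<and> (\<integral>x. harm (first_return m C w x - 1) \<partial>M) = - (\<Sum>i=1..m. p i * ln (p i))"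
proof -
  interpret iid_classes M S w m C
    by (rule iid_classes.intro[OF \<open>prob_space M\<close> iid_classes_axioms.intro])
      (fact meas indep iid C_sets C_part)+
  have "(\<integral>x. harm (first_return m C w x - 1) \<partial>M) = (\<Sum>i=1..m. - (p i * ln (p i)))"
    using integral_harm_first_return(2) p_def by (auto intro: sum.cong)
  moreover have "cond_exp_event M (\<lambda>x. harm (first_return m C w x - 1))
      {x \<in> space M. w 1 x \<in> C i} = - ln (p i)" if i: "i \<in> {1..m}" for i
    using p_pos[OF i]
    unfolding cond_exp_event_def integral_class_harm_first_return(2)[OF i] p_def[OF i] by simp
  ultimately show ?thesis
    using integral_harm_first_return(1) by (simp add: sum_negf)
qed

end
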